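(* Let $n\ge1$, $k\ge0$ be integers and define the $n\times n$ matrices $M_0(n,k)=\big(\mathcal P^+_{i+j}(k,0)\big)_{0\le i,j\le n-1}$ and $MP_0(n,k)=\big(\sum_{l\ge0}\mathcal P^+_{i+j}(k,l)\big)_{0\le i,j\le n-1}$. Then $$A(n)\cdot MP_0(n,k)=M_0(n,k)+C_0(n,k),$$ where $C_0(n,k)=(C_{i,j})_{0\le i,j\le n-1}$ has $C_{i,j}=0$ for $i\le n-2$ and $C_{n-1,j}=(xy)^{n-1}\sum_{l\ge0}\mathcal P_j(0,n-k+l)$.
   Context: Three-step paths consist of up-steps $(1,1)$, level steps $(1,0)$ and down-steps $(1,-1)$. Weights: $w((1,1))=1$, $w((1,0))=x+y$, $w((1,-1))=xy$; a path's weight is the product of its step weights. $\mathcal P_n(k,l)$ is the sum of weights of all three-step paths from $(0,k)$ to $(n,l)$; $\mathcal P^+_n(k,l)$ the same restricted to paths never running below the $x$-axis. The matrix $A(n)=(A_{n,i,j})_{0\le i,j\le n-1}$ is defined by $A_{n,i,j}=\frac{(1+x)(1+y)}{xy}$ if $i=j<n-1$; $-\frac1{xy}$ if $i=j-1<n-1$; $A_{n,n-1,n-1}=\frac{xy-(n-1)(x+y)}{xy}$; for $j<n-1$, $$A_{n,n-1,j}=\frac{(-1)^{n+j}}{xy}\sum_{l=j}^{n}\left(\binom lj\binom{n+j-1-l}{j}x^{l-j}y^{n-1-l}+\binom lj\binom{n+j-l}{j}x^{l-j}y^{n-l}\right);$$ and $0$ otherwise (binomial coefficients $\binom ab=0$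 if $b<0$ or $a<b$). *)

theory Defs
  imports Main
begin

text \<open>Three-step paths are encoded by their list of vertical increments
  (each in {-1,0,1}): 1 is an up-step (1,1), 0 a level step (1,0), -1 a down-step (1,-1).\<close>

definition step_weight :: "'a::field \<Rightarrow> 'a \<Rightarrow> int \<Rightarrow> 'a" where
  "step_weight x y s = (if s = 1 then 1 else if s = 0 then x + y else x * y)"

definition path_weight :: "'a::field \<Rightarrow> 'a \<Rightarrow> int list \<Rightarrow> 'a" where
  "path_weight x y ss = (\<Prod>s\<leftarrow>ss. step_weight x y s)"

definition paths :: "nat \<Rightarrow> int \<Rightarrow> int \<Rightarrow> int list set" where
  "paths n k l = {ss. set ss \<subseteq> {-1,0,1} \<and> length ss = n \<and> k + sum_list ss = l}"

definition pos_paths :: "nat \<Rightarrow> int \<Rightarrow> int \<Rightarrow> int list set" where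
  "pos_paths n k l = {ss \<in> paths n k l. \<forall>i\<le>n. k + sum_list (take i ss) \<ge> 0}"

definition PP :: "'a::field \<Rightarrow> 'a \<Rightarrow> nat \<Rightarrow> int \<Rightarrow> int \<Rightarrow> 'a" where
  "PP x y n k l = (\<Sum>ss\<in>paths n k l. path_weight x y ss)"

definition PPpos :: "'a::field \<Rightarrow> 'a \<Rightarrow> nat \<Rightarrow> int \<Rightarrow> int \<Rightarrow> 'a" where
  "PPpos x y n k l = (\<Sum>ss\<in>pos_paths n k l. path_weight x y ss)"

definition ibinom :: "int \<Rightarrow> int \<Rightarrow> nat" where
  "ibinom a b = (if b < 0 \<or> a < b then 0 else nat a choose nat b)"

text \<open>The matrix A(n), entries indexed by 0 \<le> i,j \<le> n-1.\<close>
definition Amat :: "'a::field \<Rightarrow> 'a \<Rightarrow> nat \<Rightarrow> nat \<Rightarrow> nat \<Rightarrow> 'a" where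
  "Amat x y n i j =
    (if i = j \<and> i < n - 1 then (1 + x) * (1 + y) / (x * y)
     else if i + 1 = j \<and> i < n - 1 then - 1 / (x * y)
     else if i = n - 1 \<and> j = n - 1 then (x * y - of_nat (n - 1) * (x + y)) / (x * y)
     else if i = n - 1 \<and> j < n - 1 then
       (-1) ^ (n + j) / (x * y) *
       (\<Sum>l=j..n.
          of_nat (ibinom (int l) (int j) * ibinom (int n + int j - 1 - int l) (int j))
            * x powi (int l - int j) * y powi (int n - 1 - int l)
        + of_nat (ibinom (int l) (int j) * ibinom (int n + int j - int l) (int j))
            * x powi (int l - int j) * y powi (int n - int l))
     else 0)"

end

theory Submission
  imports Defs "HOL-Computational_Algebra.Formal_Power_Series"
begin

text \<open>Weighted positive paths are iterates of the transfer operator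
  \<open>(T f)(h) = f(h+1) + (x+y) f(h) + xy f(h-1)\<close> on functions of the height, cut off below the
  axis: \<open>P\<^sup>+\<^sub>N(k,l) = (T\<^sup>N \<delta>\<^sub>l)(k)\<close>, so summing over \<open>l\<close> gives \<open>(T\<^sup>N 1)(k)\<close>.
  Since \<open>T 1 = (1+x)(1+y) 1 - xy \<delta>\<^sub>0\<close>, the bidiagonal rows of \<open>A(n)\<close> combine \<open>T\<^sup>i 1\<close> and
  \<open>T\<^sup>i\<^sup>+\<^sup>1 1\<close> into \<open>T\<^sup>i \<delta>\<^sub>0\<close>. The last row has entries \<open>(-1)\<^sup>n\<^sup>+\<^sup>j (c(n-1,j) + c(n,j)) / xy\<close>
  with \<open>c(N,j) = [t\<^sup>N] t\<^sup>j / ((1-xt)(1-yt))\<^sup>j\<^sup>+\<^sup>1\<close>. These coefficients obey the same three-term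
  recursion as \<open>T\<close>, which makes \<open>\<Sum>\<^sub>j (-1)\<^sup>j c(N,j) T\<^sup>j 1\<close> equal to \<open>(-1)\<^sup>N\<close> times the geometric
  sum of \<open>(xy)\<^sup>i\<close> over \<open>i \<le> min(N,h)\<close>. Two consecutive such sums differ by the boundary term
  \<open>(xy)\<^sup>n [h \<ge> n]\<close>, and \<open>T\<^sup>j\<close> turns it into unrestricted path counts, because paths of length
  \<open>j < n\<close> ending at height \<open>\<ge> n\<close> never touch the axis.\<close>

unbundle fps_syntax

definition transfer :: "'a::field \<Rightarrow> 'a \<Rightarrow> (int \<Rightarrow> 'a) \<Rightarrow> int \<Rightarrow> 'a" where
  "transfer x y f h = (if h < 0 then 0 else f (h + 1) + (x + y) * f h + x * y * f (h - 1))"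

definition nonneg_indicator :: "int \<Rightarrow> 'a::field" where
  "nonneg_indicator h = (if 0 \<le> h then 1 else 0)"

definition point_indicator :: "int \<Rightarrow> int \<Rightarrow> 'a::field" where
  "point_indicator l h = (if h = l \<and> 0 \<le> h then 1 else 0)"

lemma transfer_sum:
  "finite F \<Longrightarrow> transfer x y (\<lambda>h. \<Sum>i\<in>F. c i * f i h) = (\<lambda>h. \<Sum>i\<in>F. c i * transfer x y (f i) h)"
  by (simp add: transfer_def fun_eq_iff sum_distrib_left sum.distrib algebra_simps)

lemma transfer_scale: "transfer x y (\<lambda>h. c * f h) = (\<lambda>h. c * transfer x y f h)"
  by (simp add: transfer_def fun_eq_iff algebra_simps)

lemma transfer_add: "transfer x y (\<lambda>h. f h + g h) = (\<lambda>h. transfer x y f h + transfer x y g h)"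
  by (simp add: transfer_def fun_eq_iff algebra_simps)

lemma transfer_diff: "transfer x y (\<lambda>h. f h - g h) = (\<lambda>h. transfer x y f h - transfer x y g h)"
  by (simp add: transfer_def fun_eq_iff algebra_simps)

lemma transfer_pow_sum:
  "finite F \<Longrightarrow> (transfer x y ^^ N) (\<lambda>h. \<Sum>i\<in>F. c i * f i h)
     = (\<lambda>h. \<Sum>i\<in>F. c i * (transfer x y ^^ N) (f i) h)"
  by (induction N) (simp_all add: transfer_sum)

lemma transfer_pow_scale:
  "(transfer x y ^^ N) (\<lambda>h. c * f h) = (\<lambda>h. c * (transfer x y ^^ N) f h)"
  by (induction N) (simp_all add: transfer_scale)

lemma transfer_pow_add:
  "(transfer x y ^^ N) (\<lambda>h. f h + g h) = (\<lambda>h. (transfer x y ^^ N) f h + (transfer x y ^^ N) g h)"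
  by (induction N) (simp_all add: transfer_add)

lemma transfer_pow_diff:
  "(transfer x y ^^ N) (\<lambda>h. f h - g h) = (\<lambda>h. (transfer x y ^^ N) f h - (transfer x y ^^ N) g h)"
  by (induction N) (simp_all add: transfer_diff)

lemma transfer_pow_cong:
  "(\<And>h. h \<le> h0 + int N \<Longrightarrow> f h = g h) \<Longrightarrow> (transfer x y ^^ N) f h0 = (transfer x y ^^ N) g h0"
proof (induction N arbitrary: h0)
  case (Suc N)
  then have "(transfer x y ^^ N) f h = (transfer x y ^^ N) g h" if "h \<le> h0 + 1" for h
    using that by (intro Suc.IH) auto
  then show ?case
    by (simp only: funpow.simps comp_apply) (simp add: transfer_def)
qed simp

lemma finite_paths: "finite (paths N k l)"
  by (rule finite_subset[OF _ finite_lists_length_eq[of "{-1,0,1::int}" N]]) (auto simp: paths_def)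

lemma finite_pos_paths: "finite (pos_paths N k l)"
  by (rule finite_subset[OF _ finite_paths[of N k l]]) (auto simp: pos_paths_def)

lemma pos_paths_0: "pos_paths 0 k l = (if k = l \<and> 0 \<le> k then {[]} else {})"
  by (auto simp: pos_paths_def paths_def)

lemma pos_paths_neg: "k < 0 \<Longrightarrow> pos_paths N k l = {}"
  by (force simp: pos_paths_def)

lemma nonneg_prefix_sums_Cons:
  "(\<forall>i\<le>Suc N. 0 \<le> k + sum_list (take i (s # t)))
     \<longleftrightarrow> 0 \<le> k \<and> (\<forall>i\<le>N. 0 \<le> k + s + sum_list (take i t))"
  by (simp add: All_less_Suc2 add.assoc flip: less_Suc_eq_le)

lemma pos_paths_Suc:
  assumes "0 \<le> k"
  shows "pos_paths (Suc N) k l =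
    Cons 1 ` pos_paths N (k + 1) l \<union> Cons 0 ` pos_paths N k l \<union> Cons (-1) ` pos_paths N (k - 1) l"
proof (rule set_eqI)
  fix ss :: "int list"
  have "ss \<in> pos_paths (Suc N) k l
      \<longleftrightarrow> (\<exists>s t. ss = s # t \<and> s \<in> {-1,0,1} \<and> t \<in> pos_paths N (k + s) l)"
    using assms by (cases ss) (auto simp: pos_paths_def paths_def nonneg_prefix_sums_Cons add.assoc)
  then show "ss \<in> pos_paths (Suc N) k l \<longleftrightarrow> ss \<in> Cons 1 ` pos_paths N (k + 1) l
      \<union> Cons 0 ` pos_paths N k l \<union> Cons (-1) ` pos_paths N (k - 1) l"
    by auto
qed

lemma PPpos_Suc:
  "PPpos x y (Suc N) k l = (if k < 0 then 0 else
     PPpos x y N (k + 1) l + (x + y) * PPpos x y N k l + x * y * PPpos x y N (k - 1) l)"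
proof (cases "k < 0")
  case True
  then show ?thesis by (simp add: PPpos_def pos_paths_neg)
next
  case False
  have Cons_sum: "sum (path_weight x y) (Cons s ` pos_paths N k' l) = step_weight x y s * PPpos x y N k' l"
    for s k'
    by (simp add: sum.reindex PPpos_def path_weight_def sum_distrib_left)
  let ?w = "path_weight x y"
  let ?U = "Cons 1 ` pos_paths N (k + 1) l" and ?L = "Cons 0 ` pos_paths N k l"
    and ?D = "Cons (-1) ` pos_paths N (k - 1) l"
  have "PPpos x y (Suc N) k l = sum ?w (?U \<union> ?L \<union> ?D)"
    using False by (simp add: PPpos_def pos_paths_Suc)
  also have "\<dots> = sum ?w (?U \<union> ?L) + sum ?w ?D"
    by (rule sum.union_disjoint) (auto simp: finite_pos_paths)
  also have "sum ?w (?U \<union> ?L) = sum ?w ?U + sum ?w ?L"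
    by (rule sum.union_disjoint) (auto simp: finite_pos_paths)
  finally show ?thesis
    using False by (simp add: Cons_sum step_weight_def)
qed

lemma PPpos_eq_transfer_pow: "PPpos x y N k l = (transfer x y ^^ N) (point_indicator l) k"
proof (induction N arbitrary: k)
  case 0
  then show ?case by (simp add: PPpos_def pos_paths_0 point_indicator_def path_weight_def)
next
  case (Suc N)
  then show ?case by (simp add: PPpos_Suc transfer_def)
qed

lemma sum_point_indicator:
  "(\<Sum>l\<le>B. point_indicator (a + int l) h :: 'a::field)
     = (if a \<le> h \<and> h \<le> a + int B \<and> 0 \<le> h then 1 else 0)"
proof -
  have "(\<Sum>l\<le>B. point_indicator (a + int l) h :: 'a)
      = (\<Sum>l\<le>B. if l = nat (h - a) then (if 0 \<le> h \<and> a \<le> h then 1 else 0) else 0)"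
    by (rule sum.cong) (auto simp: point_indicator_def)
  then show ?thesis by auto
qed

lemma sum_PPpos_eq_transfer_pow:
  assumes "k + int N \<le> int B"
  shows "(\<Sum>l\<le>B. PPpos x y N k (int l)) = (transfer x y ^^ N) nonneg_indicator k"
proof -
  have "(\<Sum>l\<le>B. PPpos x y N k (int l))
      = (transfer x y ^^ N) (\<lambda>h. \<Sum>l\<le>B. 1 * point_indicator (0 + int l) h) k"
    by (simp only: transfer_pow_sum[OF finite_atMost]) (simp add: PPpos_eq_transfer_pow)
  also have "\<dots> = (transfer x y ^^ N) nonneg_indicator k"
    using assms
    by (intro transfer_pow_cong) (auto simp: nonneg_indicator_def sum_point_indicator[of 0, simplified])
  finally show ?thesis .
qed

lemma sum_list_le_length: "set ss \<subseteq> {-1,0,1::int} \<Longrightarrow> sum_list ss \<le> int (length ss)"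
  by (induction ss) auto

lemma pos_paths_eq_paths_if_high:
  assumes "int N < l" and "0 \<le> k"
  shows "pos_paths N k l = paths N k l"
proof -
  have "0 \<le> k + sum_list (take i ss)" if ss: "ss \<in> paths N k l" and "i \<le> N" for ss i
  proof -
    have "sum_list (drop i ss) \<le> int (length (drop i ss))"
      using ss by (intro sum_list_le_length) (auto simp: paths_def dest: in_set_dropD)
    moreover have "sum_list ss = sum_list (take i ss) + sum_list (drop i ss)"
      by (metis append_take_drop_id sum_list_append)
    ultimately show ?thesis using ss assms by (auto simp: paths_def)
  qed
  then show ?thesis by (auto simp: pos_paths_def)
qed

lemma PP_shift: "PP x y N k l = PP x y N 0 (l - k)"
  unfolding PP_def paths_def by (rule sum.cong) auto

definition row_coeff :: "'a::field \<Rightarrow> 'a \<Rightarrow> nat \<Rightarrow> nat \<Rightarrow> 'a" where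
  "row_coeff x y N j =
    (\<Sum>l=j..N. of_nat ((l choose j) * ((N + j - l) choose j)) * x ^ (l - j) * y ^ (N - l))"

definition neg_binomial_series :: "'a::field \<Rightarrow> nat \<Rightarrow> 'a fps" where
  "neg_binomial_series x j = Abs_fps (\<lambda>a. of_nat ((a + j) choose j) * x ^ a)"

definition row_coeff_series :: "'a::field \<Rightarrow> 'a \<Rightarrow> nat \<Rightarrow> 'a fps" where
  "row_coeff_series x y j = fps_X ^ j * neg_binomial_series x j * neg_binomial_series y j"

lemma row_coeff_eq_fps_nth: "row_coeff x y N j = row_coeff_series x y j $ N"
proof (cases "N < j")
  case True
  then show ?thesis by (simp add: row_coeff_def row_coeff_series_def fps_X_power_mult_nth mult.assoc)
next
  case False
  have "row_coeff_series x y j $ N = (\<Sum>i=0..N-j.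
      of_nat ((i + j) choose j) * x ^ i * (of_nat ((N - j - i + j) choose j) * y ^ (N - j - i)))"
    using False unfolding row_coeff_series_def mult.assoc fps_X_power_mult_nth
    by (simp add: fps_mult_nth neg_binomial_series_def mult.assoc)
  also have "\<dots> = (\<Sum>i=0..N-j.
      of_nat (((i + j) choose j) * ((N + j - (i + j)) choose j)) * x ^ ((i + j) - j) * y ^ (N - (i + j)))"
    by (rule sum.cong) (use False in \<open>auto simp: algebra_simps\<close>)
  also have "\<dots> = row_coeff x y N j"
    unfolding row_coeff_def using False
    by (subst sum.shift_bounds_cl_nat_ivl[of _ 0 j "N - j", symmetric]) simp
  finally show ?thesis by simp
qed

lemma one_minus_X_mult_nth:
  fixes F :: "'a::comm_ring_1 fps"
  shows "((1 - fps_const c * fps_X) * F) $ n = (if n = 0 then F $ 0 else F $ n - c * F $ (n - 1))"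
proof -
  have "(1 - fps_const c * fps_X) * F = F - fps_const c * (fps_X * F)"
    by (simp add: left_diff_distrib mult.assoc)
  then show ?thesis by simp
qed

lemma neg_binomial_series_Suc:
  "(1 - fps_const x * fps_X) * neg_binomial_series x (Suc j) = neg_binomial_series x j"
proof (rule fps_ext)
  fix n
  show "((1 - fps_const x * fps_X) * neg_binomial_series x (Suc j)) $ n = neg_binomial_series x j $ n"
  proof (cases n)
    case 0
    then show ?thesis by (simp add: one_minus_X_mult_nth neg_binomial_series_def binomial_eq_0)
  next
    case (Suc m)
    have "(of_nat ((Suc m + Suc j) choose Suc j) - of_nat ((m + Suc j) choose Suc j) :: 'a)
        = of_nat ((Suc m + j) choose j)"
      by (simp add: of_nat_diff)
    then show ?thesis
      using Suc by (simp add: one_minus_X_mult_nth neg_binomial_series_def algebra_simps)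
  qed
qed

lemma neg_binomial_series_0: "(1 - fps_const x * fps_X) * neg_binomial_series x 0 = 1"
proof (rule fps_ext)
  fix n
  show "((1 - fps_const x * fps_X) * neg_binomial_series x 0) $ n = (1::'a fps) $ n"
    by (cases n) (simp_all add: one_minus_X_mult_nth neg_binomial_series_def)
qed

abbreviation char_series :: "'a::field \<Rightarrow> 'a \<Rightarrow> 'a fps" where
  "char_series x y \<equiv> (1 - fps_const x * fps_X) * (1 - fps_const y * fps_X)"

lemma char_series_mult_row_coeff_series_Suc:
  "char_series x y * row_coeff_series x y (Suc j) = fps_X * row_coeff_series x y j"
proof -
  have "char_series x y * row_coeff_series x y (Suc j)
     = fps_X * fps_X ^ j * ((1 - fps_const x * fps_X) * neg_binomial_series x (Suc j))
         * ((1 - fps_const y * fps_X) * neg_binomial_series y (Suc j))"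
    by (simp add: row_coeff_series_def ac_simps)
  also have "\<dots> = fps_X * row_coeff_series x y j"
    unfolding neg_binomial_series_Suc by (simp add: row_coeff_series_def ac_simps)
  finally show ?thesis .
qed

lemma char_series_mult_row_coeff_series_0: "char_series x y * row_coeff_series x y 0 = 1"
proof -
  have "char_series x y * row_coeff_series x y 0
     = ((1 - fps_const x * fps_X) * neg_binomial_series x 0)
         * ((1 - fps_const y * fps_X) * neg_binomial_series y 0)"
    by (simp add: row_coeff_series_def ac_simps)
  then show ?thesis by (simp add: neg_binomial_series_0)
qed

lemma char_series_mult_nth:
  fixes F :: "'a::field fps"
  shows "(char_series x y * F) $ Suc (Suc n) = F $ Suc (Suc n) - (x + y) * F $ Suc n + x * y * F $ n"
  by (simp only: mult.assoc one_minus_X_mult_nth) (simp add: algebra_simps one_minus_X_mult_nth)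

lemma row_coeff_rec:
  "row_coeff x y (Suc (Suc N)) j = (x + y) * row_coeff x y (Suc N) j - x * y * row_coeff x y N j
     + (if j = 0 then 0 else row_coeff x y (Suc N) (j - 1))"
proof (cases j)
  case 0
  have "(char_series x y * row_coeff_series x y 0) $ Suc (Suc N) = 0"
    by (simp add: char_series_mult_row_coeff_series_0)
  then show ?thesis
    using 0 unfolding row_coeff_eq_fps_nth char_series_mult_nth by (simp add: algebra_simps)
next
  case (Suc i)
  have "(char_series x y * row_coeff_series x y (Suc i)) $ Suc (Suc N) = row_coeff_series x y i $ Suc N"
    by (simp add: char_series_mult_row_coeff_series_Suc)
  then show ?thesis
    using Suc unfolding row_coeff_eq_fps_nth char_series_mult_nth by (simp add: algebra_simps)
qed

lemma row_coeff_eq_0: "N < j \<Longrightarrow> row_coeff x y N j = 0"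
  by (simp add: row_coeff_def)

lemma row_coeff_diag: "row_coeff x y N N = 1"
  by (simp add: row_coeff_def)

lemma row_coeff_subdiag: "row_coeff x y (Suc N) N = of_nat (Suc N) * (x + y)"
proof -
  have "{N..Suc N} = {N, Suc N}" by auto
  then show ?thesis by (simp add: row_coeff_def algebra_simps)
qed

definition trunc_geom :: "'a::field \<Rightarrow> 'a \<Rightarrow> nat \<Rightarrow> int \<Rightarrow> 'a" where
  "trunc_geom x y N h = (if h < 0 then 0 else \<Sum>i\<le>min N (nat h). (x * y) ^ i)"

lemma geom_sum_Suc_shift: "(\<Sum>i\<le>Suc m. p ^ i) = 1 + p * (\<Sum>i\<le>m. p ^ i :: 'a::comm_ring_1)"
  unfolding sum.atMost_Suc_shift by (simp add: sum_distrib_left)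

lemma trunc_geom_rec:
  "trunc_geom x y (Suc (Suc N)) h
     = transfer x y (trunc_geom x y (Suc N)) h - (x + y) * trunc_geom x y (Suc N) h
       - x * y * trunc_geom x y N h"
proof (cases "h \<le> 0")
  case True
  then show ?thesis by (auto simp: trunc_geom_def transfer_def)
next
  case False
  then obtain m where h: "h = int m + 1"
    by (intro that[of "nat (h - 1)"]) simp
  then have "nat h = Suc m" "nat (h + 1) = Suc (Suc m)" "nat (h - 1) = m"
    by auto
  then show ?thesis
    using h by (simp add: trunc_geom_def transfer_def geom_sum_Suc_shift del: sum.atMost_Suc)
qed

lemma trunc_geom_Suc_diff:
  "trunc_geom x y (Suc N) h - trunc_geom x y N h = (x * y) ^ Suc N * (if int (Suc N) \<le> h then 1 else 0)"
proof -
  consider "h < 0" | "int (Suc N) \<le> h" | "0 \<le> h" "nat h \<le> N"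
    by linarith
  then show ?thesis
    by cases (auto simp: trunc_geom_def min_def)
qed

definition alt_row_sum :: "'a::field \<Rightarrow> 'a \<Rightarrow> nat \<Rightarrow> int \<Rightarrow> 'a" where
  "alt_row_sum x y N h = (\<Sum>j\<le>N. (-1) ^ j * row_coeff x y N j * (transfer x y ^^ j) nonneg_indicator h)"

lemma alt_row_sum_atMost:
  "N \<le> M \<Longrightarrow>
    alt_row_sum x y N h = (\<Sum>j\<le>M. (-1) ^ j * row_coeff x y N j * (transfer x y ^^ j) nonneg_indicator h)"
  unfolding alt_row_sum_def by (rule sum.mono_neutral_left) (auto simp: row_coeff_eq_0)

lemma alt_row_sum_rec:
  "alt_row_sum x y (Suc (Suc N)) h
     = (x + y) * alt_row_sum x y (Suc N) h - transfer x y (alt_row_sum x y (Suc N)) h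
       - x * y * alt_row_sum x y N h"
proof -
  let ?T = "\<lambda>j. (transfer x y ^^ j) nonneg_indicator h"
  let ?c = "row_coeff x y"
  let ?f = "\<lambda>j. (-1) ^ j * (if j = 0 then 0 else ?c (Suc N) (j - 1)) * ?T j"
  have "alt_row_sum x y (Suc (Suc N)) h = (\<Sum>j\<le>Suc (Suc N). (-1) ^ j *
      ((x + y) * ?c (Suc N) j - x * y * ?c N j + (if j = 0 then 0 else ?c (Suc N) (j - 1))) * ?T j)"
    unfolding alt_row_sum_def by (simp only: row_coeff_rec)
  also have "\<dots> = (x + y) * (\<Sum>j\<le>Suc (Suc N). (-1) ^ j * ?c (Suc N) j * ?T j)
      - x * y * (\<Sum>j\<le>Suc (Suc N). (-1) ^ j * ?c N j * ?T j) + (\<Sum>j\<le>Suc (Suc N). ?f j)"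
    by (simp add: sum_distrib_left sum.distrib sum_subtractf algebra_simps)
  also have "(\<Sum>j\<le>Suc (Suc N). (-1) ^ j * ?c (Suc N) j * ?T j) = alt_row_sum x y (Suc N) h"
    by (rule alt_row_sum_atMost[symmetric]) simp
  also have "(\<Sum>j\<le>Suc (Suc N). (-1) ^ j * ?c N j * ?T j) = alt_row_sum x y N h"
    by (rule alt_row_sum_atMost[symmetric]) simp
  also have "(\<Sum>j\<le>Suc (Suc N). ?f j)
      = - (\<Sum>i\<le>Suc N. (-1) ^ i * ?c (Suc N) i * transfer x y ((transfer x y ^^ i) nonneg_indicator) h)"
    by (simp only: sum.atMost_Suc_shift[of ?f]) (simp add: sum_negf)
  also have "(\<Sum>i\<le>Suc N. (-1) ^ i * ?c (Suc N) i * transfer x y ((transfer x y ^^ i) nonneg_indicator) h)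
      = transfer x y (alt_row_sum x y (Suc N)) h"
    unfolding alt_row_sum_def[abs_def] transfer_sum[OF finite_atMost] ..
  finally show ?thesis by simp
qed

lemma alt_row_sum_eq_trunc_geom: "alt_row_sum x y N = (\<lambda>h. (-1) ^ N * trunc_geom x y N h)"
proof (induction N rule: induct_nat_012)
  case 0
  show ?case
    by (simp add: fun_eq_iff alt_row_sum_def trunc_geom_def row_coeff_diag nonneg_indicator_def)
next
  case 1
  have "row_coeff x y 1 0 = x + y"
    using row_coeff_subdiag[of x y 0] by simp
  then have "alt_row_sum x y 1 h = - trunc_geom x y 1 h" for h
    by (cases "h < 0 \<or> h = 0")
      (auto simp: alt_row_sum_def trunc_geom_def nonneg_indicator_def transfer_def row_coeff_diag)
  then show ?case
    by (simp add: fun_eq_iff)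
next
  case (ge2 N)
  show ?case
    unfolding fun_eq_iff alt_row_sum_rec ge2 transfer_scale by (simp add: trunc_geom_rec algebra_simps)
qed

lemma Amat_upper_row:
  assumes "i < n"
  shows "Amat x y (Suc n) i m =
    (if m = i then (1 + x) * (1 + y) / (x * y) else if m = Suc i then - 1 / (x * y) else 0)"
  using assms by (simp add: Amat_def)

lemma Amat_binom_sum_eq_row_coeff:
  "(\<Sum>l=j..N. of_nat (ibinom (int l) (int j) * ibinom (int N + int j - int l) (int j))
      * x powi (int l - int j) * y powi (int N - int l)) = row_coeff x y N j"
  unfolding row_coeff_def
proof (rule sum.cong)
  fix l assume "l \<in> {j..N}"
  then have "ibinom (int l) (int j) = l choose j"
      "ibinom (int N + int j - int l) (int j) = (N + j - l) choose j" "int l - int j = int (l - j)" "int N - int l = int (N - l)"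
    by (auto simp: ibinom_def nat_diff_distrib' simp flip: of_nat_add)
  then show "of_nat (ibinom (int l) (int j) * ibinom (int N + int j - int l) (int j))
      * x powi (int l - int j) * y powi (int N - int l)
    = of_nat ((l choose j) * ((N + j - l) choose j)) * x ^ (l - j) * y ^ (N - l)"
    by (simp only: power_int_of_nat)
qed simp

lemma Amat_binom_sum_eq_row_coeff_Suc:
  "(\<Sum>l=j..Suc N. of_nat (ibinom (int l) (int j) * ibinom (int (Suc N) + int j - 1 - int l) (int j))
      * x powi (int l - int j) * y powi (int (Suc N) - 1 - int l)) = row_coeff x y N j"
proof (cases "j \<le> Suc N")
  case False
  then show ?thesis by (simp add: row_coeff_def)
next
  case True
  have "ibinom (int j - 1) (int j) = 0"
    by (simp add: ibinom_def)
  then show ?thesis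
    using True by (simp add: sum.cl_ivl_Suc Amat_binom_sum_eq_row_coeff[symmetric] algebra_simps)
qed

lemma Amat_last_row:
  assumes "x * y \<noteq> 0" and "m \<le> n"
  shows "x * y * Amat x y (Suc n) n m
    = (-1) ^ (Suc n + m) * (row_coeff x y n m + row_coeff x y (Suc n) m)
      + (if m = n then (1 + x) * (1 + y) else 0)"
proof (cases "m = n")
  case True
  then show ?thesis
    using assms by (simp add: Amat_def row_coeff_diag row_coeff_subdiag field_simps)
next
  case False
  have "Amat x y (Suc n) n m = (-1) ^ (Suc n + m) / (x * y) * (row_coeff x y n m + row_coeff x y (Suc n) m)"
    unfolding Amat_def diff_Suc_1 sum.distrib Amat_binom_sum_eq_row_coeff Amat_binom_sum_eq_row_coeff_Suc
    using False assms(2) by simp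
  with False assms(1) show ?thesis
    by simp
qed

lemma transfer_nonneg_indicator:
  "transfer x y nonneg_indicator =
    (\<lambda>h. (1 + x) * (1 + y) * nonneg_indicator h - x * y * point_indicator 0 h)"
  by (auto simp: fun_eq_iff transfer_def nonneg_indicator_def point_indicator_def algebra_simps)

lemma transfer_pow_Suc_nonneg_indicator:
  "(transfer x y ^^ Suc N) nonneg_indicator h
     = (1 + x) * (1 + y) * (transfer x y ^^ N) nonneg_indicator h
       - x * y * (transfer x y ^^ N) (point_indicator 0) h"
  by (simp only: funpow_Suc_right comp_apply transfer_nonneg_indicator transfer_pow_diff transfer_pow_scale)

lemma last_row_transfer_sum:
  assumes xy: "x * y \<noteq> 0"
  shows "(\<Sum>m<Suc n. Amat x y (Suc n) n m * (transfer x y ^^ m) nonneg_indicator h)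
    = (transfer x y ^^ n) (point_indicator 0) h + (x * y) ^ n * (if int (Suc n) \<le> h then 1 else 0)"
proof -
  let ?T = "\<lambda>m. (transfer x y ^^ m) nonneg_indicator h"
  let ?s = "\<lambda>m. (-1) ^ (Suc n + m) * (row_coeff x y n m + row_coeff x y (Suc n) m) * ?T m"
  have "x * y * (\<Sum>m<Suc n. Amat x y (Suc n) n m * ?T m)
      = (\<Sum>m<Suc n. ?s m + (if m = n then (1 + x) * (1 + y) * ?T m else 0))"
    unfolding sum_distrib_left
    by (rule sum.cong) (simp_all add: mult.assoc[symmetric] Amat_last_row[OF xy] ring_distribs)
  also have "\<dots> = (\<Sum>m<Suc n. ?s m) + (1 + x) * (1 + y) * ?T n"
    by (simp add: sum.distrib)
  also have "(\<Sum>m<Suc n. ?s m) = (\<Sum>m\<le>Suc n. ?s m) - ?T (Suc n)"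
    unfolding lessThan_Suc_atMost by (simp add: row_coeff_eq_0 row_coeff_diag)
  also have "(\<Sum>m\<le>Suc n. ?s m) = (-1) ^ Suc n * (alt_row_sum x y n h + alt_row_sum x y (Suc n) h)"
    unfolding alt_row_sum_atMost[of n "Suc n", OF lessI[THEN less_imp_le]] alt_row_sum_def[of _ _ "Suc n"]
    by (simp add: sum_distrib_left sum.distrib sum_subtractf sum_negf power_add algebra_simps
        del: sum.atMost_Suc)
  also have "\<dots> = trunc_geom x y (Suc n) h - trunc_geom x y n h"
    by (simp add: alt_row_sum_eq_trunc_geom algebra_simps)
  finally have "x * y * (\<Sum>m<Suc n. Amat x y (Suc n) n m * ?T m)
      = x * y * ((transfer x y ^^ n) (point_indicator 0) h
          + (x * y) ^ n * (if int (Suc n) \<le> h then 1 else 0))"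
    unfolding trunc_geom_Suc_diff transfer_pow_Suc_nonneg_indicator by (simp add: algebra_simps)
  with xy show ?thesis
    by simp
qed

lemma PPpos_eq_PP_if_high: "int N < l \<Longrightarrow> 0 \<le> k \<Longrightarrow> PPpos x y N k l = PP x y N k l"
  by (simp add: PPpos_def PP_def pos_paths_eq_paths_if_high)

lemma transfer_pow_ge_indicator:
  assumes "j < a"
  shows "(transfer x y ^^ j) (\<lambda>h. if int a \<le> h then 1 else 0) (int k)
    = (\<Sum>l\<le>k + j. PP x y j 0 (int a - int k + int l))"
proof -
  have "(transfer x y ^^ j) (\<lambda>h. if int a \<le> h then 1 else 0) (int k)
      = (transfer x y ^^ j) (\<lambda>h. \<Sum>l\<le>k + j. 1 * point_indicator (int a + int l) h) (int k)"
    by (rule transfer_pow_cong) (auto simp: sum_point_indicator)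
  also have "\<dots> = (\<Sum>l\<le>k + j. PPpos x y j (int k) (int a + int l))"
    by (simp only: transfer_pow_sum[OF finite_atMost]) (simp add: PPpos_eq_transfer_pow)
  also have "\<dots> = (\<Sum>l\<le>k + j. PP x y j 0 (int a - int k + int l))"
    using assms
    by (intro sum.cong) (simp_all add: PPpos_eq_PP_if_high PP_shift[where k = "int k"] algebra_simps)
  finally show ?thesis .
qed

lemma upper_row_transfer_sum:
  assumes "x * y \<noteq> 0" and "i < n"
  shows "(\<Sum>m<Suc n. Amat x y (Suc n) i m * (transfer x y ^^ m) nonneg_indicator h)
    = (transfer x y ^^ i) (point_indicator 0) h"
proof -
  let ?T = "\<lambda>m. (transfer x y ^^ m) nonneg_indicator h"
  have "(\<Sum>m<Suc n. Amat x y (Suc n) i m * ?T m)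
      = (\<Sum>m<Suc n. (if m = i then (1 + x) * (1 + y) / (x * y) * ?T i else 0)
          + (if m = Suc i then - 1 / (x * y) * ?T (Suc i) else 0))"
    using assms(2) by (intro sum.cong) (auto simp: Amat_upper_row)
  also have "\<dots> = ((1 + x) * (1 + y) * ?T i - ?T (Suc i)) / (x * y)"
    using assms(2) by (simp add: sum.distrib diff_divide_distrib)
  also have "\<dots> = (transfer x y ^^ i) (point_indicator 0) h"
    unfolding transfer_pow_Suc_nonneg_indicator using assms(1) by simp
  finally show ?thesis .
qed

lemma weighted_sum_PPpos_eq_transfer_pow:
  assumes "finite M"
  shows "(\<Sum>m\<in>M. a m * (\<Sum>l\<le>k + m + j. PPpos x y (m + j) (int k) (int l)))
    = (transfer x y ^^ j) (\<lambda>h. \<Sum>m\<in>M. a m * (transfer x y ^^ m) nonneg_indicator h) (int k)"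
  by (simp add: sum_PPpos_eq_transfer_pow transfer_pow_sum[OF assms] funpow_add add.commute[of _ j])

lemma Amat_mult_MP0_entry:
  assumes xy: "x * y \<noteq> 0" and "i < Suc n" and "j < Suc n"
  shows "(\<Sum>m<Suc n. Amat x y (Suc n) i m * (\<Sum>l\<le>k + m + j. PPpos x y (m + j) (int k) (int l)))
    = PPpos x y (i + j) (int k) 0
      + (if i = n then (x * y) ^ n * (\<Sum>l\<le>k + j. PP x y j 0 (int (Suc n) - int k + int l)) else 0)"
proof -
  let ?T = "transfer x y"
  have row: "(\<Sum>m<Suc n. Amat x y (Suc n) i m * (\<Sum>l\<le>k + m + j. PPpos x y (m + j) (int k) (int l)))
      = (?T ^^ j) (\<lambda>h. \<Sum>m<Suc n. Amat x y (Suc n) i m * (?T ^^ m) nonneg_indicator h) (int k)"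
    by (rule weighted_sum_PPpos_eq_transfer_pow) simp
  have PPpos_shift: "(?T ^^ j) ((?T ^^ i) (point_indicator 0)) (int k) = PPpos x y (i + j) (int k) 0"
    by (simp add: PPpos_eq_transfer_pow funpow_add add.commute[of i])
  show ?thesis
  proof (cases "i = n")
    case True
    note row
    also have "(?T ^^ j) (\<lambda>h. \<Sum>m<Suc n. Amat x y (Suc n) i m * (?T ^^ m) nonneg_indicator h) (int k)
        = (?T ^^ j) ((?T ^^ i) (point_indicator 0)) (int k)
          + (x * y) ^ n * (?T ^^ j) (\<lambda>h. if int (Suc n) \<le> h then 1 else 0) (int k)"
      unfolding True last_row_transfer_sum[OF xy] transfer_pow_add transfer_pow_scale ..
    also have "(?T ^^ j) (\<lambda>h. if int (Suc n) \<le> h then 1 else 0) (int k)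
        = (\<Sum>l\<le>k + j. PP x y j 0 (int (Suc n) - int k + int l))"
      using \<open>j < Suc n\<close> by (rule transfer_pow_ge_indicator)
    finally show ?thesis
      using True PPpos_shift by simp
  next
    case False
    with \<open>i < Suc n\<close> have "i < n"
      by simp
    with False PPpos_shift show ?thesis
      unfolding row upper_row_transfer_sum[OF xy \<open>i < n\<close>] by simp
  qed
qed

theorem lemma11:
  fixes x y :: "'a::field" and n k :: nat
  assumes "x \<noteq> 0" and "y \<noteq> 0" and "n \<ge> 1"
  shows "\<forall>i<n. \<forall>j<n.
    (\<Sum>m<n. Amat x y n i m * (\<Sum>l\<le>k + m + j. PPpos x y (m + j) (int k) (int l)))
    = PPpos x y (i + j) (int k) 0
      + (if i = n - 1
         then (x * y) ^ (n - 1) * (\<Sum>l\<le>k + j. PP x y j 0 (int n - int k + int l))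
         else 0)"
proof -
  obtain n' where n: "n = Suc n'"
    using assms(3) by (cases n) auto
  have "x * y \<noteq> 0"
    using assms(1,2) by simp
  then show ?thesis
    unfolding n diff_Suc_1 using Amat_mult_MP0_entry by blast
qed

end
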